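(* For $|q|<1$ and every nonzero complex number $a$, \[ \sum_{i,j,k\geq 0} \frac{q^{i^2+j^2+k^2+i(j+k)}}{(q;q)_i(q;q)_j(q;q)_k} a^{j-k}=\frac{(-aq,-q/a,q^2;q^2)_\infty}{(q;q)_\infty}. \]
   Context: For $|q|<1$: $(a;q)_n=\prod_{k=0}^{n-1}(1-aq^k)$ ($(a;q)_0=1$), $(a;q)_\infty=\prod_{k\ge0}(1-aq^k)$, $(a_1,\dots,a_m;q)_\infty=\prod_\ell(a_\ell;q)_\infty$. *)

theory Defs
  imports "HOL-Analysis.Analysis"
begin

definition qpoch :: "complex \<Rightarrow> complex \<Rightarrow> nat \<Rightarrow> complex" where
  "qpoch a q n = (\<Prod>k<n. 1 - a * q ^ k)"

definition qpoch_inf :: "complex \<Rightarrow> complex \<Rightarrow> complex" where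
  "qpoch_inf a q = (\<Prod>k. 1 - a * q ^ k)"

end

theory Submission
  imports Defs
begin

text \<open>
  Put n = j - k and m = min j k, so that (j, k) is (m + p, m) or (m, m + p) with p = |n|.
  For fixed n the double sum over (i, m), regrouped along s = i + m, collapses by the finite
  identity  sum_{m <= s} q^(m(m+p)) / ((q)_(s-m) (q)_m (q)_(m+p)) = 1 / ((q)_s (q)_(s+p))  to
  q^(p^2) sum_s q^(s(s+p)) / ((q)_s (q)_(s+p)),  which is q^(p^2) / (q)_inf by the Durfee
  rectangle identity. Summing a^n q^(n^2) / (q)_inf over all integers n is Jacobi's triple
  product, which follows from its finite form (the q-binomial theorem at x = q^(1-2N)/z) by
  Tannery's theorem.
\<close>

section \<open>Tannery's theorem and summability\<close>

lemma tannery_has_sum: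
  fixes a :: "'i \<Rightarrow> nat \<Rightarrow> 'a :: {real_normed_algebra, banach}"
  assumes "countable (UNIV :: 'i set)" "infinite (UNIV :: 'i set)"
    and lim: "\<And>k. (\<lambda>n. a k n) \<longlonglongrightarrow> b k"
    and bound: "\<And>k n. norm (a k n) \<le> M k" and M: "M summable_on UNIV"
    and partial: "\<And>n. ((\<lambda>k. a k n) has_sum S n) UNIV" and S: "S \<longlonglongrightarrow> x"
  shows "(b has_sum x) UNIV"
proof -
  obtain e :: "nat \<Rightarrow> 'i" where e: "bij_betw e UNIV UNIV"
    using countable_infiniteE' assms(1,2) by blast
  have "summable (\<lambda>k. M (e k))"
    using M summable_on_reindex_bij_betw[OF e, of M] by (simp add: summable_on_imp_summable)
  then have "eventually (\<lambda>n. summable (\<lambda>k. norm (a (e k) n))) sequentially \<and>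
      summable (\<lambda>k. norm (b (e k))) \<and> (\<lambda>n. \<Sum>k. a (e k) n) \<longlonglongrightarrow> (\<Sum>k. b (e k))"
    by (intro tannerys_theorem) (simp_all add: lim bound always_eventually)
  then have tannery: "summable (\<lambda>k. norm (b (e k)))" "(\<lambda>n. \<Sum>k. a (e k) n) \<longlonglongrightarrow> (\<Sum>k. b (e k))"
    by auto
  have "(\<lambda>k. a (e k) n) sums S n" for n
    using partial[of n] has_sum_reindex_bij_betw[OF e, of "\<lambda>k. a k n"] by (simp add: has_sum_imp_sums)
  then have "(\<lambda>n. \<Sum>k. a (e k) n) = S"
    by (auto simp: sums_iff)
  with tannery(2) S have "(\<lambda>k. b (e k)) sums x"
    using LIMSEQ_unique summable_norm_cancel[OF tannery(1)] by (metis summable_sums)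
  then have "((\<lambda>k. b (e k)) has_sum x) UNIV"
    by (rule norm_summable_imp_has_sum[OF tannery(1)])
  then show ?thesis
    using has_sum_reindex_bij_betw[OF e] by blast
qed

lemma summable_power_mult_power_square:
  fixes r s :: real
  assumes "0 \<le> r" "r < 1" "0 \<le> s"
  shows "summable (\<lambda>n. s ^ n * r ^ (n * n))"
proof -
  have "(\<lambda>n. s * r ^ n) \<longlonglongrightarrow> s * 0"
    using assms by (intro tendsto_mult tendsto_const LIMSEQ_power_zero) auto
  then obtain N where N: "\<And>n. n \<ge> N \<Longrightarrow> s * r ^ n < 1 / 2"
    using order_tendstoD(2)[of _ "s * 0" sequentially "1 / 2"]
    by (auto simp: eventually_sequentially)
  have "norm (s ^ n * r ^ (n * n)) \<le> (1 / 2) ^ n" if "n \<ge> N" for n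
  proof -
    have "s ^ n * r ^ (n * n) = (s * r ^ n) ^ n"
      by (simp add: power_mult_distrib power_mult)
    also have "\<dots> \<le> (1 / 2) ^ n"
      using N[OF that] assms by (intro power_mono) auto
    finally show ?thesis
      using assms by simp
  qed
  then show ?thesis
    by (intro summable_comparison_test[OF _ summable_geometric[of "1 / 2 :: real"]]) auto
qed

lemma summable_on_nat_abs_int:
  fixes h :: "nat \<Rightarrow> real"
  assumes "summable h" "\<And>n. h n \<ge> 0"
  shows "(\<lambda>l::int. h (nat \<bar>l\<bar>)) summable_on UNIV"
proof -
  have h: "h summable_on UNIV"
    using assms summable_on_UNIV_nonneg_real_iff by blast
  have "(\<lambda>l::int. h (nat \<bar>l\<bar>)) summable_on range int"
    using h by (subst summable_on_reindex) (auto simp: o_def)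
  moreover have "(\<lambda>l::int. h (nat \<bar>l\<bar>)) summable_on range (\<lambda>n. - int n)"
    using h by (subst summable_on_reindex) (auto simp: o_def inj_on_def)
  ultimately have "(\<lambda>l::int. h (nat \<bar>l\<bar>)) summable_on (range int \<union> range (\<lambda>n. - int n))"
    by (rule summable_on_union)
  also have "range int \<union> range (\<lambda>n. - int n) = UNIV"
  proof -
    have "l \<in> range int \<union> range (\<lambda>n. - int n)" for l :: int
      by (cases "l \<ge> 0") (auto intro: range_eqI[of _ _ "nat l"] range_eqI[of _ _ "nat (- l)"])
    then show ?thesis by blast
  qed
  finally show ?thesis .
qed

lemma summable_on_product_nonneg:
  fixes f g :: "_ \<Rightarrow> real"
  assumes f: "f summable_on A" and g: "g summable_on B"
    and "\<And>x. x \<in> A \<Longrightarrow> 0 \<le> f x" and "\<And>y. y \<in> B \<Longrightarrow> 0 \<le> g y"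
  shows "(\<lambda>(x, y). f x * g y) summable_on A \<times> B"
proof (rule summable_on_SigmaI)
  show "((\<lambda>y. (\<lambda>(x, y). f x * g y) (x, y)) has_sum f x * infsum g B) B" for x
    using has_sum_cmult_right[OF has_sum_infsum[OF g]] by simp
  show "(\<lambda>x. f x * infsum g B) summable_on A"
    using f by (rule summable_on_cmult_left)
qed (use assms in auto)

lemma norm_theta_term_le:
  fixes q z :: "'a :: real_normed_field"
  assumes "z \<noteq> 0"
  shows "norm (z powi l * q ^ (nat \<bar>l\<bar>)\<^sup>2)
       \<le> (norm z + inverse (norm z)) ^ nat \<bar>l\<bar> * norm q ^ (nat \<bar>l\<bar> * nat \<bar>l\<bar>)"
proof -
  have "norm (z powi l) \<le> (norm z + inverse (norm z)) ^ nat \<bar>l\<bar>"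
  proof (cases "l \<ge> 0")
    case True
    then have "norm (z powi l) = norm z ^ nat \<bar>l\<bar>"
      by (simp add: norm_power_int power_int_def norm_power)
    then show ?thesis
      by (simp add: power_mono)
  next
    case False
    then have "norm (z powi l) = inverse (norm z) ^ nat \<bar>l\<bar>"
      by (simp add: norm_power_int power_int_def power_inverse norm_inverse norm_power)
    then show ?thesis
      by (simp add: power_mono)
  qed
  then show ?thesis
    by (simp add: norm_mult norm_power power2_eq_square mult_right_mono)
qed

section \<open>q-Pochhammer symbols\<close>

lemma qpoch_0 [simp]: "qpoch x b 0 = 1"
  by (simp add: qpoch_def)

lemma qpoch_Suc: "qpoch x b (Suc n) = qpoch x b n * (1 - x * b ^ n)"
  by (simp add: qpoch_def)

lemma qpoch_add: "qpoch x b (n + k) = qpoch x b n * qpoch (x * b ^ n) b k"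
  by (induction k) (simp_all add: qpoch_Suc power_add mult.assoc mult.left_commute)

lemma qpoch_Suc_shift: "qpoch x b (Suc n) = (1 - x) * qpoch (x * b) b n"
  using qpoch_add[of x b 1 n] by (simp add: qpoch_def)

lemma qpoch_nonzero:
  assumes "norm b < 1"
  shows "qpoch b b n \<noteq> 0"
proof -
  have "norm (b * b ^ k) < 1" for k
    using assms by (simp add: norm_mult norm_power power_less_one_iff flip: power_Suc)
  then have "b * b ^ k \<noteq> 1" for k
    by (metis norm_one order.irrefl)
  then show ?thesis
    by (simp add: qpoch_def prod_zero_iff)
qed

lemma convergent_prod_qpoch:
  fixes x b :: complex
  assumes "norm b < 1"
  shows "convergent_prod (\<lambda>k. 1 - x * b ^ k)"
proof -
  have "summable (\<lambda>k. norm ((1 - x * b ^ k) - 1))"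
    using assms by (simp add: norm_mult norm_power summable_geometric)
  then show ?thesis
    by (intro abs_convergent_prod_imp_convergent_prod summable_imp_abs_convergent_prod)
qed

lemma qpoch_LIMSEQ:
  assumes "norm b < 1"
  shows "qpoch x b \<longlonglongrightarrow> qpoch_inf x b"
proof -
  have "(\<lambda>n. \<Prod>k\<le>n. 1 - x * b ^ k) \<longlonglongrightarrow> qpoch_inf x b"
    unfolding qpoch_inf_def by (rule convergent_prod_LIMSEQ[OF convergent_prod_qpoch[OF assms]])
  then show ?thesis
    unfolding qpoch_def using LIMSEQ_lessThan_iff_atMost by blast
qed

lemma qpoch_tendsto:
  assumes "norm b < 1" and "filterlim h sequentially F"
  shows "((\<lambda>n. qpoch x b (h n)) \<longlongrightarrow> qpoch_inf x b) F"
  using filterlim_compose[OF qpoch_LIMSEQ[OF assms(1)] assms(2)] .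

lemma qpoch_inf_nonzero:
  assumes "norm b < 1"
  shows "qpoch_inf b b \<noteq> 0"
proof -
  have "1 - b * b ^ k \<noteq> 0" for k
    using qpoch_nonzero[OF assms, of "Suc k"] by (simp add: qpoch_Suc)
  then show ?thesis
    unfolding qpoch_inf_def by (intro prodinf_nonzero convergent_prod_qpoch assms)
qed

lemma qpoch_bounded:
  assumes "norm b < 1"
  obtains C where "\<And>n. norm (qpoch x b n) \<le> C"
  using convergent_imp_Bseq[OF convergentI[OF qpoch_LIMSEQ[OF assms]]] by (meson BseqE)

lemma inverse_qpoch_bounded:
  assumes "norm b < 1"
  obtains K where "K > 0" "\<And>n. norm (inverse (qpoch b b n)) \<le> K"
proof -
  have "(\<lambda>n. inverse (qpoch b b n)) \<longlonglongrightarrow> inverse (qpoch_inf b b)"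
    by (intro tendsto_inverse qpoch_LIMSEQ qpoch_inf_nonzero assms)
  then show ?thesis
    using convergent_imp_Bseq[OF convergentI] by (meson BseqE that)
qed

lemma inverse_qpoch_prod3_bounded:
  assumes "norm b < 1"
  obtains K where "K \<ge> 0" "\<And>i j k. norm (inverse (qpoch b b i * qpoch b b j * qpoch b b k)) \<le> K"
proof -
  obtain K where K: "K > 0" "\<And>n. norm (inverse (qpoch b b n)) \<le> K"
    using inverse_qpoch_bounded[OF assms] by blast
  then have "norm (inverse (qpoch b b i * qpoch b b j * qpoch b b k)) \<le> K * K * K" for i j k
    by (simp add: norm_mult mult_mono)
  with K show ?thesis
    using that[of "K * K * K"] by simp
qed

section \<open>Gaussian binomial coefficients\<close>

fun qbinomial :: "complex \<Rightarrow> nat \<Rightarrow> nat \<Rightarrow> complex" where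
  "qbinomial b 0 k = (if k = 0 then 1 else 0)"
| "qbinomial b (Suc n) 0 = 1"
| "qbinomial b (Suc n) (Suc k) = b ^ Suc k * qbinomial b n (Suc k) + qbinomial b n k"

lemma qbinomial_0_right [simp]: "qbinomial b n 0 = 1"
  by (cases n) auto

lemma qbinomial_eq_0: "n < k \<Longrightarrow> qbinomial b n k = 0"
  by (induction b n k rule: qbinomial.induct) auto

lemma qbinomial_mult_qpoch:
  "k \<le> n \<Longrightarrow> qbinomial b n k * qpoch b b k * qpoch b b (n - k) = qpoch b b n"
proof (induction n arbitrary: k)
  case 0
  then show ?case by simp
next
  case (Suc n)
  show ?case
  proof (cases k)
    case 0
    then show ?thesis by simp
  next
    case (Suc k')
    with Suc.prems have "k' \<le> n" by simp
    have left: "qbinomial b n k' * qpoch b b (Suc k') * qpoch b b (n - k')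
        = qpoch b b n * (1 - b ^ Suc k')"
      using Suc.IH[OF \<open>k' \<le> n\<close>] by (simp add: qpoch_Suc algebra_simps)
    have right: "b ^ Suc k' * qbinomial b n (Suc k') * qpoch b b (Suc k') * qpoch b b (n - k')
        = qpoch b b n * (b ^ Suc k' - b ^ Suc n)"
    proof (cases "k' = n")
      case True
      then show ?thesis by (simp add: qbinomial_eq_0)
    next
      case False
      with \<open>k' \<le> n\<close> have nk: "n - k' = Suc (n - Suc k')" and "Suc k' \<le> n" by auto
      have "b ^ Suc k' * qbinomial b n (Suc k') * qpoch b b (Suc k') * qpoch b b (n - k')
          = b ^ Suc k' * (qbinomial b n (Suc k') * qpoch b b (Suc k') * qpoch b b (n - Suc k'))
            * (1 - b * b ^ (n - Suc k'))"
        unfolding nk qpoch_Suc by (simp add: algebra_simps)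
      also have "\<dots> = qpoch b b n * (b ^ Suc k' - b ^ Suc k' * b ^ (n - k'))"
        using Suc.IH[OF \<open>Suc k' \<le> n\<close>] nk by (simp add: algebra_simps)
      also have "b ^ Suc k' * b ^ (n - k') = b ^ Suc n"
        using \<open>k' \<le> n\<close> by (simp flip: power_add)
      finally show ?thesis .
    qed
    have "qbinomial b (Suc n) k * qpoch b b k * qpoch b b (Suc n - k)
        = b ^ Suc k' * qbinomial b n (Suc k') * qpoch b b (Suc k') * qpoch b b (n - k')
          + qbinomial b n k' * qpoch b b (Suc k') * qpoch b b (n - k')"
      using Suc by (simp add: algebra_simps)
    also have "\<dots> = qpoch b b (Suc n)"
      unfolding left right by (simp add: qpoch_Suc algebra_simps)
    finally show ?thesis .
  qed
qed

lemma qbinomial_eq_qpoch_quotient: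
  assumes "norm b < 1" "k \<le> n"
  shows "qbinomial b n k = qpoch b b n / (qpoch b b k * qpoch b b (n - k))"
  using qbinomial_mult_qpoch[OF assms(2), of b] qpoch_nonzero[OF assms(1)]
  by (simp add: field_simps)

lemma qbinomial_bounded:
  assumes "norm b < 1"
  obtains C where "\<And>n k. norm (qbinomial b n k) \<le> C"
proof -
  obtain U where U: "\<And>n. norm (qpoch b b n) \<le> U"
    using qpoch_bounded[OF assms] by blast
  obtain K where K: "K > 0" "\<And>n. norm (inverse (qpoch b b n)) \<le> K"
    using inverse_qpoch_bounded[OF assms] by blast
  have "0 \<le> U"
    using norm_ge_zero U by (rule order_trans)
  have "norm (qbinomial b n k) \<le> U * (K * K)" for n k
  proof (cases "k \<le> n")
    case True
    have "norm (qbinomial b n k)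
        = norm (qpoch b b n) * (norm (inverse (qpoch b b k)) * norm (inverse (qpoch b b (n - k))))"
      by (simp add: qbinomial_eq_qpoch_quotient[OF assms True] norm_divide norm_mult divide_inverse)
    also have "\<dots> \<le> U * (K * K)"
      using U K \<open>0 \<le> U\<close> by (intro mult_mono) auto
    finally show ?thesis .
  next
    case False
    with \<open>0 \<le> U\<close> K show ?thesis by (simp add: qbinomial_eq_0)
  qed
  then show ?thesis using that by blast
qed

lemma qbinomial_central_tendsto:
  assumes b: "norm b < 1"
  shows "(\<lambda>N. qbinomial b (2 * N) (nat (int N - l))) \<longlonglongrightarrow> 1 / qpoch_inf b b"
proof (rule Lim_transform_eventually)
  have "filterlim (\<lambda>N. nat (int N - l)) sequentially sequentially"
    "filterlim (\<lambda>N. 2 * N - nat (int N - l)) sequentially sequentially"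
    by (simp_all add: filterlim_sequentially_iff_filterlim_real) real_asymp+
  then show "(\<lambda>N. qpoch b b (2 * N) / (qpoch b b (nat (int N - l)) * qpoch b b (2 * N - nat (int N - l))))
      \<longlonglongrightarrow> 1 / qpoch_inf b b"
    using qpoch_inf_nonzero[OF b]
    by (auto intro!: tendsto_eq_intros qpoch_tendsto[OF b] mult_nat_left_at_top filterlim_ident)
  show "\<forall>\<^sub>F N in sequentially. qpoch b b (2 * N) / (qpoch b b (nat (int N - l)) * qpoch b b (2 * N - nat (int N - l)))
      = qbinomial b (2 * N) (nat (int N - l))"
    using eventually_ge_at_top[of "nat \<bar>l\<bar>"]
    by eventually_elim (simp add: qbinomial_eq_qpoch_quotient[OF b])
qed

lemma Suc_choose_two: "Suc k choose 2 = (k choose 2) + k"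
  using binomial_Suc_Suc[of k 1] by (simp add: numeral_2_eq_2)

theorem qbinomial_theorem:
  "(\<Prod>j<n. 1 + x * b ^ j) = (\<Sum>k\<le>n. b ^ (k choose 2) * qbinomial b n k * x ^ k)"
proof (induction n arbitrary: x)
  case 0
  then show ?case by (simp add: binomial_eq_0)
next
  case (Suc n)
  define g where "g k = b ^ (k choose 2) * qbinomial b n k * (x * b) ^ k" for k
  have shift: "(\<Sum>k\<le>n. g k) = 1 + (\<Sum>k\<le>n. g (Suc k))"
    using sum.atMost_Suc_shift[of g n] qbinomial_eq_0[of n "Suc n" b]
    by (simp add: g_def binomial_eq_0)
  have "(\<Prod>j<Suc n. 1 + x * b ^ j) = (1 + x) * (\<Prod>j<n. 1 + (x * b) * b ^ j)"
    by (subst prod.lessThan_Suc_shift) (simp add: mult.assoc)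
  also have "\<dots> = (1 + x) * (\<Sum>k\<le>n. g k)"
    by (simp add: Suc.IH g_def)
  also have "\<dots> = (\<Sum>k\<le>n. g k) + x * (\<Sum>k\<le>n. g k)"
    by (simp add: algebra_simps)
  also have "\<dots> = 1 + (\<Sum>k\<le>n. g (Suc k) + x * g k)"
    by (subst (1) shift) (simp add: sum.distrib sum_distrib_left)
  also have "\<dots> = 1 + (\<Sum>k\<le>n. b ^ (Suc k choose 2) * qbinomial b (Suc n) (Suc k) * x ^ Suc k)"
    by (simp add: g_def Suc_choose_two power_add power_mult_distrib algebra_simps)
  also have "\<dots> = (\<Sum>k\<le>Suc n. b ^ (k choose 2) * qbinomial b (Suc n) k * x ^ k)"
    by (subst sum.atMost_Suc_shift) (simp add: binomial_eq_0)
  finally show ?case .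
qed

section \<open>Durfee rectangles\<close>

text \<open>
  By the q-Pascal rule each term of the sum for s + 1 splits in two, and the pieces
  recombine into the terms of the sum for s with p + 1.
\<close>

lemma qbinomial_durfee_sum:
  "(\<Sum>m\<le>s. q ^ (m * (m + p)) * qbinomial q s m * qpoch (q ^ (m + p + 1)) q (s - m)) = 1"
proof (induction s arbitrary: p)
  case 0
  then show ?case by simp
next
  case (Suc s)
  define R where "R a n = qpoch (q ^ a) q n" for a n
  define f where "f m = q ^ (m * (m + p)) * qbinomial q (Suc s) m * R (m + p + 1) (Suc s - m)" for m
  define g where "g m = q ^ (m * (m + Suc p)) * qbinomial q s m * R (m + Suc p + 1) (s - m)" for m
  define h where "h m = q ^ (m * (m + p) + m) * qbinomial q s m * R (m + p + 1) (Suc s - m)" for m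
  define B where "B m = q ^ (Suc m * (Suc m + p)) * qbinomial q s m * R (m + p + 2) (s - m)" for m
  have f_0: "f 0 = h 0"
    by (simp add: f_def h_def)
  have f_Suc: "f (Suc m) = h (Suc m) + B m" for m
    by (simp add: f_def h_def B_def power_add algebra_simps)
  have h_B: "h m + B m = g m" if "m \<le> s" for m
  proof -
    define c where "c = q ^ (m * (m + p) + m) * qbinomial q s m"
    have "R (m + p + 1) (Suc s - m) = (1 - q ^ (m + p + 1)) * R (m + p + 2) (s - m)"
      using that by (simp add: R_def Suc_diff_le qpoch_Suc_shift mult_ac)
    then have "h m = c * (1 - q ^ (m + p + 1)) * R (m + p + 2) (s - m)"
      by (simp add: h_def c_def)
    moreover have "B m = c * q ^ (m + p + 1) * R (m + p + 2) (s - m)"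
      by (simp add: B_def c_def algebra_simps flip: power_add)
    moreover have "g m = c * R (m + p + 2) (s - m)"
      by (simp add: g_def c_def algebra_simps)
    ultimately show ?thesis
      by (simp add: algebra_simps)
  qed
  have "(\<Sum>m\<le>Suc s. f m) = h 0 + (\<Sum>m\<le>s. h (Suc m) + B m)"
    by (simp only: sum.atMost_Suc_shift f_Suc f_0)
  also have "\<dots> = (\<Sum>m\<le>Suc s. h m) + (\<Sum>m\<le>s. B m)"
    by (simp only: sum.atMost_Suc_shift[of h] sum.distrib add.assoc)
  also have "(\<Sum>m\<le>Suc s. h m) = (\<Sum>m\<le>s. h m)"
    by (simp add: h_def qbinomial_eq_0)
  also have "(\<Sum>m\<le>s. h m) + (\<Sum>m\<le>s. B m) = (\<Sum>m\<le>s. g m)"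
    by (simp add: h_B flip: sum.distrib)
  finally show ?case
    using Suc.IH[of "Suc p"] by (simp add: f_def g_def R_def)
qed

lemma durfee_identity_finite:
  assumes "norm q < 1"
  shows "(\<Sum>m\<le>s. q ^ (m * (m + p)) / (qpoch q q (s - m) * qpoch q q m * qpoch q q (m + p)))
       = 1 / (qpoch q q s * qpoch q q (s + p))"
proof -
  have summand: "q ^ (m * (m + p)) / (qpoch q q (s - m) * qpoch q q m * qpoch q q (m + p))
      = q ^ (m * (m + p)) * qbinomial q s m * qpoch (q ^ (m + p + 1)) q (s - m)
        / (qpoch q q s * qpoch q q (s + p))" if "m \<le> s" for m
  proof -
    have "qpoch q q (s + p) = qpoch q q (m + p + (s - m))"
      using that by (simp add: ac_simps)
    also have "\<dots> = qpoch q q (m + p) * qpoch (q ^ (m + p + 1)) q (s - m)"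
      by (simp add: qpoch_add)
    finally have "qpoch (q ^ (m + p + 1)) q (s - m) = qpoch q q (s + p) / qpoch q q (m + p)"
      using qpoch_nonzero[OF assms] by (simp add: field_simps)
    then show ?thesis
      using qpoch_nonzero[OF assms]
      by (simp add: qbinomial_eq_qpoch_quotient[OF assms that] field_simps)
  qed
  show ?thesis
    using qbinomial_durfee_sum[where q = q and s = s and p = p]
    by (simp add: summand sum_divide_distrib[symmetric])
qed

theorem durfee_identity:
  assumes q: "norm q < 1"
  shows "((\<lambda>m. q ^ (m * (m + p)) / (qpoch q q m * qpoch q q (m + p))) has_sum (1 / qpoch_inf q q)) UNIV"
proof -
  define P where "P = qpoch q q"
  define L where "L = qpoch_inf q q"
  have P: "P n \<noteq> 0" for n
    unfolding P_def by (rule qpoch_nonzero[OF q])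
  have L: "L \<noteq> 0"
    unfolding L_def by (rule qpoch_inf_nonzero[OF q])
  obtain K where K: "K \<ge> 0" "\<And>i j k. norm (inverse (P i * P j * P k)) \<le> K"
    unfolding P_def using inverse_qpoch_prod3_bounded[OF q] by blast
  define a where "a m s = (if m \<le> s then q ^ (m * (m + p)) / (P (s - m) * P m * P (m + p)) else 0)" for m s
  define b where "b m = q ^ (m * (m + p)) / (L * P m * P (m + p))" for m
  have "(b has_sum (1 / (L * L))) UNIV"
  proof (rule tannery_has_sum)
    show "(\<lambda>s. a m s) \<longlonglongrightarrow> b m" for m
    proof (rule Lim_transform_eventually)
      show "(\<lambda>s. q ^ (m * (m + p)) / (P (s - m) * P m * P (m + p))) \<longlonglongrightarrow> b m"
        unfolding b_def P_def L_def using L P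
        by (intro tendsto_intros qpoch_tendsto[OF q] filterlim_minus_const_nat_at_top)
          (simp_all add: L_def P_def)
      show "\<forall>\<^sub>F s in sequentially. q ^ (m * (m + p)) / (P (s - m) * P m * P (m + p)) = a m s"
        using eventually_ge_at_top[of m] by eventually_elim (simp add: a_def)
    qed
    show "norm (a m s) \<le> K * norm q ^ (m * m)" for m s
    proof -
      have "norm (q ^ (m * (m + p))) \<le> norm q ^ (m * m)"
        using q by (simp add: norm_power power_decreasing)
      then have "norm (inverse (P (s - m) * P m * P (m + p))) * norm (q ^ (m * (m + p)))
          \<le> K * norm q ^ (m * m)"
        using K by (intro mult_mono) auto
      then show ?thesis
        using K by (simp add: a_def divide_inverse norm_mult mult.commute)
    qed
    show "(\<lambda>m. K * norm q ^ (m * m)) summable_on UNIV"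
      using summable_power_mult_power_square[of "norm q" 1] q K
      by (subst summable_on_UNIV_nonneg_real_iff) (auto intro: summable_mult)
    show "((\<lambda>m. a m s) has_sum (1 / (P s * P (s + p)))) UNIV" for s
      using durfee_identity_finite[OF q, where s = s and p = p]
      by (intro has_sum_finite_neutralI[where B = "{..s}"]) (auto simp: a_def P_def)
    show "(\<lambda>s. 1 / (P s * P (s + p))) \<longlonglongrightarrow> 1 / (L * L)"
      unfolding P_def L_def using L
      by (intro tendsto_intros qpoch_tendsto[OF q] filterlim_add_const_nat_at_top filterlim_ident)
        (simp add: L_def)
  qed auto
  then have "((\<lambda>m. L * b m) has_sum (L * (1 / (L * L)))) UNIV"
    by (rule has_sum_cmult_right)
  then show ?thesis
    using L by (simp add: b_def P_def L_def)
qed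

section \<open>Jacobi's triple product\<close>

lemma prod_odd_powers: "(\<Prod>i<N. z * q ^ (2 * i + 1)) = z ^ N * q ^ (N\<^sup>2)"
  by (induction N) (simp_all add: power2_eq_square power_add mult_2_right algebra_simps)

lemma jacobi_partial_product_eq:
  fixes q z :: complex
  assumes q: "q \<noteq> 0" and z: "z \<noteq> 0"
  shows "qpoch (- z * q) (q\<^sup>2) N * qpoch (- q / z) (q\<^sup>2) N
       = z ^ N * q ^ (N\<^sup>2) * (\<Prod>j<2 * N. 1 + q / (z * q ^ (2 * N)) * (q\<^sup>2) ^ j)"
proof -
  define x where "x = q / (z * q ^ (2 * N))"
  define u where "u i = z * q ^ (2 * i + 1)" for i
  have u: "u i \<noteq> 0" for i
    using q z by (simp add: u_def)
  have u_qpoch: "(\<Prod>i<N. 1 + u i) = qpoch (- z * q) (q\<^sup>2) N"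
    by (simp add: u_def qpoch_def power_add mult_ac flip: power_mult)
  have u_prod: "(\<Prod>i<N. u i) = z ^ N * q ^ (N\<^sup>2)"
    unfolding u_def by (rule prod_odd_powers)
  have lower: "1 + x * (q\<^sup>2) ^ (N - Suc i) = (1 + u i) * inverse (u i)" if "i < N" for i
  proof -
    have "q * (q\<^sup>2) ^ (N - Suc i) * q ^ (2 * i + 1) = q ^ (1 + 2 * (N - Suc i) + (2 * i + 1))"
      by (simp add: power_add power_mult)
    also have "1 + 2 * (N - Suc i) + (2 * i + 1) = 2 * N"
      using that by simp
    finally have "x * (q\<^sup>2) ^ (N - Suc i) * u i = 1"
      using q z by (simp add: x_def u_def field_simps)
    then show ?thesis
      using u[of i] by (simp add: field_simps)
  qed
  have upper: "1 + x * (q\<^sup>2) ^ (N + i) = 1 + q / z * (q\<^sup>2) ^ i" for i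
    using q z by (simp add: x_def power_add power_mult field_simps flip: power_mult_distrib power_mult)
  have "(\<Prod>j<N + M. f j) = (\<Prod>j<N. f j) * (\<Prod>i<M. f (N + i))" for M and f :: "nat \<Rightarrow> complex"
    by (induction M) (simp_all add: mult.assoc)
  then have "(\<Prod>j<2 * N. 1 + x * (q\<^sup>2) ^ j)
      = (\<Prod>i<N. 1 + x * (q\<^sup>2) ^ (N - Suc i)) * (\<Prod>i<N. 1 + x * (q\<^sup>2) ^ (N + i))"
    using prod.nat_diff_reindex[of "\<lambda>j. 1 + x * (q\<^sup>2) ^ j" N] by (simp add: mult_2)
  also have "\<dots> = (\<Prod>i<N. 1 + u i) * inverse (\<Prod>i<N. u i) * qpoch (- q / z) (q\<^sup>2) N"
    using prod_inversef[of u "{..<N}"] by (simp add: lower upper qpoch_def prod.distrib o_def)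
  finally show ?thesis
    using u_prod q z by (simp add: u_qpoch x_def field_simps)
qed

lemma jacobi_coefficient_eq:
  fixes q z :: complex
  assumes q: "q \<noteq> 0" and z: "z \<noteq> 0"
  shows "z ^ N * q ^ (N\<^sup>2) * ((q\<^sup>2) ^ (k choose 2) * (q / (z * q ^ (2 * N))) ^ k)
       = z powi (int N - int k) * q ^ (nat \<bar>int N - int k\<bar>)\<^sup>2"
proof -
  define d where "d = nat \<bar>int N - int k\<bar>"
  have "2 * (k choose 2) + k = k\<^sup>2"
    by (induction k) (simp_all add: Suc_choose_two power2_eq_square binomial_eq_0)
  then have "q ^ (N\<^sup>2) * ((q\<^sup>2) ^ (k choose 2) * q ^ k) = q ^ (N\<^sup>2 + k\<^sup>2)"
    by (metis power_add power_mult)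
  also have "int (N\<^sup>2 + k\<^sup>2) = int (2 * N * k + d\<^sup>2)"
    by (simp add: d_def power2_eq_square algebra_simps)
  then have "N\<^sup>2 + k\<^sup>2 = 2 * N * k + d\<^sup>2"
    by (simp only: of_nat_eq_iff)
  finally have exponents: "q ^ (N\<^sup>2) * ((q\<^sup>2) ^ (k choose 2) * q ^ k) = q ^ (2 * N * k) * q ^ (d\<^sup>2)"
    by (simp only: power_add)
  have "z ^ N * q ^ (N\<^sup>2) * ((q\<^sup>2) ^ (k choose 2) * (q / (z * q ^ (2 * N))) ^ k)
      = z ^ N * (q ^ (N\<^sup>2) * ((q\<^sup>2) ^ (k choose 2) * q ^ k)) / (z ^ k * q ^ (2 * N * k))"
    by (simp add: power_divide power_mult_distrib field_simps flip: power_mult)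
  also have "\<dots> = z ^ N / z ^ k * q ^ (d\<^sup>2)"
    unfolding exponents using q z by (simp add: field_simps)
  finally show ?thesis
    using z by (simp add: d_def power_int_diff)
qed

lemma finite_jacobi_triple_product:
  fixes q z :: complex
  assumes q: "q \<noteq> 0" and z: "z \<noteq> 0"
  shows "qpoch (- z * q) (q\<^sup>2) N * qpoch (- q / z) (q\<^sup>2) N
       = (\<Sum>l\<in>{- int N..int N}. z powi l * q ^ (nat \<bar>l\<bar>)\<^sup>2 * qbinomial (q\<^sup>2) (2 * N) (nat (int N - l)))"
proof -
  define x where "x = q / (z * q ^ (2 * N))"
  have "qpoch (- z * q) (q\<^sup>2) N * qpoch (- q / z) (q\<^sup>2) N
      = (\<Sum>k\<le>2 * N. z ^ N * q ^ (N\<^sup>2) * ((q\<^sup>2) ^ (k choose 2) * x ^ k) * qbinomial (q\<^sup>2) (2 * N) k)"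
    unfolding jacobi_partial_product_eq[OF q z] qbinomial_theorem
    by (simp add: sum_distrib_left x_def mult_ac)
  also have "\<dots> = (\<Sum>k\<le>2 * N. z powi (int N - int k) * q ^ (nat \<bar>int N - int k\<bar>)\<^sup>2
                    * qbinomial (q\<^sup>2) (2 * N) k)"
    by (simp only: x_def jacobi_coefficient_eq[OF q z])
  also have "\<dots> = (\<Sum>l\<in>{- int N..int N}. z powi l * q ^ (nat \<bar>l\<bar>)\<^sup>2 * qbinomial (q\<^sup>2) (2 * N) (nat (int N - l)))"
    by (rule sum.reindex_bij_witness[of _ "\<lambda>l. nat (int N - l)" "\<lambda>k. int N - int k"]) auto
  finally show ?thesis .
qed

theorem jacobi_triple_product:
  fixes q z :: complex
  assumes q: "norm q < 1" and z: "z \<noteq> 0"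
  shows "((\<lambda>l::int. z powi l * q ^ (nat \<bar>l\<bar>)\<^sup>2) has_sum
           (qpoch_inf (- z * q) (q\<^sup>2) * qpoch_inf (- q / z) (q\<^sup>2) * qpoch_inf (q\<^sup>2) (q\<^sup>2))) UNIV"
proof (cases "q = 0")
  case True
  then show ?thesis
    by (intro has_sum_finite_neutralI[where B = "{0}"]) (auto simp: qpoch_inf_def)
next
  case False
  define Q where "Q = q\<^sup>2"
  have Q: "norm Q < 1"
    using q by (simp add: Q_def norm_power power_less_one_iff)
  define L where "L = qpoch_inf Q Q"
  have L: "L \<noteq> 0"
    unfolding L_def by (rule qpoch_inf_nonzero[OF Q])
  obtain C where C: "\<And>n k. norm (qbinomial Q n k) \<le> C"
    using qbinomial_bounded[OF Q] by blast
  have C0: "0 \<le> C"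
    using norm_ge_zero C by (rule order_trans)
  define t where "t l = z powi l * q ^ (nat \<bar>l\<bar>)\<^sup>2" for l :: int
  define a where "a l N = (if l \<in> {- int N..int N} then t l * qbinomial Q (2 * N) (nat (int N - l)) else 0)"
    for l N
  define c where "c = norm z + inverse (norm z)"
  have "((\<lambda>l. t l / L) has_sum (qpoch_inf (- z * q) Q * qpoch_inf (- q / z) Q)) UNIV"
  proof (rule tannery_has_sum)
    show "(\<lambda>N. a l N) \<longlonglongrightarrow> t l / L" for l
    proof (rule Lim_transform_eventually)
      show "(\<lambda>N. t l * qbinomial Q (2 * N) (nat (int N - l))) \<longlonglongrightarrow> t l / L"
        using qbinomial_central_tendsto[OF Q, of l] tendsto_mult_left by (fastforce simp: L_def)
      show "\<forall>\<^sub>F N in sequentially. t l * qbinomial Q (2 * N) (nat (int N - l)) = a l N"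
        using eventually_ge_at_top[of "nat \<bar>l\<bar>"] by eventually_elim (auto simp: a_def)
    qed
    show "norm (a l N) \<le> C * (c ^ nat \<bar>l\<bar> * norm q ^ (nat \<bar>l\<bar> * nat \<bar>l\<bar>))" for l N
    proof -
      have "norm (a l N) \<le> norm (t l) * C"
        using C[of "2 * N" "nat (int N - l)"] C0 by (simp add: a_def norm_mult mult_left_mono)
      then have "norm (a l N) \<le> C * norm (t l)"
        by (simp only: mult.commute)
      then show ?thesis
        unfolding t_def c_def using norm_theta_term_le[OF z, of l q] C0 by (meson mult_left_mono order_trans)
    qed
    show "(\<lambda>l::int. C * (c ^ nat \<bar>l\<bar> * norm q ^ (nat \<bar>l\<bar> * nat \<bar>l\<bar>))) summable_on UNIV"
      using summable_power_mult_power_square[of "norm q" c] q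
      by (intro summable_on_cmult_right summable_on_nat_abs_int) (auto simp: c_def)
    show "((\<lambda>l. a l N) has_sum (qpoch (- z * q) Q N * qpoch (- q / z) Q N)) UNIV" for N
      unfolding Q_def finite_jacobi_triple_product[OF False z]
      by (intro has_sum_finite_neutralI[where B = "{- int N..int N}"]) (auto simp: a_def t_def Q_def)
    show "(\<lambda>N. qpoch (- z * q) Q N * qpoch (- q / z) Q N)
        \<longlonglongrightarrow> qpoch_inf (- z * q) Q * qpoch_inf (- q / z) Q"
      by (intro tendsto_mult qpoch_LIMSEQ Q)
  qed auto
  then have "((\<lambda>l. L * (t l / L)) has_sum (L * (qpoch_inf (- z * q) Q * qpoch_inf (- q / z) Q))) UNIV"
    by (rule has_sum_cmult_right)
  then show ?thesis
    using L by (simp add: t_def L_def Q_def mult_ac)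
qed

section \<open>The triple sum\<close>

definition triple_term :: "complex \<Rightarrow> nat \<Rightarrow> nat \<Rightarrow> nat \<Rightarrow> complex" where
  "triple_term q i j k = q ^ (i\<^sup>2 + j\<^sup>2 + k\<^sup>2 + i * (j + k)) / (qpoch q q i * qpoch q q j * qpoch q q k)"

lemma triple_term_swap: "triple_term q i j k = triple_term q i k j"
  by (simp add: triple_term_def algebra_simps)

lemma triple_term_bound:
  assumes "norm q < 1"
  obtains K where "K \<ge> 0" "\<And>i j k. norm (triple_term q i j k) \<le> K * norm q ^ (i * i + j * j + k * k)"
proof -
  obtain K where K: "K \<ge> 0" "\<And>i j k. norm (inverse (qpoch q q i * qpoch q q j * qpoch q q k)) \<le> K"
    using inverse_qpoch_prod3_bounded[OF assms] by blast
  have "norm (triple_term q i j k) \<le> K * norm q ^ (i * i + j * j + k * k)" for i j k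
  proof -
    have "norm (q ^ (i\<^sup>2 + j\<^sup>2 + k\<^sup>2 + i * (j + k))) \<le> norm q ^ (i * i + j * j + k * k)"
      using assms by (simp add: norm_power power2_eq_square power_decreasing)
    then have "norm (inverse (qpoch q q i * qpoch q q j * qpoch q q k)) * norm (q ^ (i\<^sup>2 + j\<^sup>2 + k\<^sup>2 + i * (j + k)))
        \<le> K * norm q ^ (i * i + j * j + k * k)"
      using K by (intro mult_mono) auto
    then show ?thesis
      by (simp add: triple_term_def divide_inverse norm_mult mult.commute)
  qed
  with K show ?thesis
    using that by blast
qed

lemma triple_term_diagonal_sum:
  assumes "norm q < 1"
  shows "(\<Sum>m\<le>s. triple_term q (s - m) (m + p) m)
       = q ^ (p\<^sup>2) * q ^ (s * (s + p)) / (qpoch q q s * qpoch q q (s + p))"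
proof -
  have summand: "triple_term q (s - m) (m + p) m
      = q ^ (p\<^sup>2) * q ^ (s * (s + p)) * (q ^ (m * (m + p)) / (qpoch q q (s - m) * qpoch q q m * qpoch q q (m + p)))"
    if "m \<le> s" for m
  proof -
    define i where "i = s - m"
    have s: "s = i + m"
      using that by (simp add: i_def)
    have exponent: "i\<^sup>2 + (m + p)\<^sup>2 + m\<^sup>2 + i * ((m + p) + m) = p\<^sup>2 + (i + m) * (i + m + p) + m * (m + p)"
      by (simp add: power2_eq_square algebra_simps)
    show ?thesis
      unfolding i_def[symmetric] triple_term_def exponent by (simp add: s divide_inverse power_add mult_ac)
  qed
  have "(\<Sum>m\<le>s. triple_term q (s - m) (m + p) m) = (\<Sum>m\<le>s. q ^ (p\<^sup>2) * q ^ (s * (s + p))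
      * (q ^ (m * (m + p)) / (qpoch q q (s - m) * qpoch q q m * qpoch q q (m + p))))"
    by (rule sum.cong) (simp_all add: summand)
  also have "\<dots> = q ^ (p\<^sup>2) * q ^ (s * (s + p))
      * (\<Sum>m\<le>s. q ^ (m * (m + p)) / (qpoch q q (s - m) * qpoch q q m * qpoch q q (m + p)))"
    by (rule sum_distrib_left[symmetric])
  finally show ?thesis
    by (simp add: durfee_identity_finite[OF assms])
qed

theorem triple_term_fibre_has_sum:
  assumes q: "norm q < 1"
  shows "((\<lambda>(i, m). triple_term q i (m + p) m) has_sum q ^ (p\<^sup>2) / qpoch_inf q q) UNIV"
proof -
  define G where "G = (\<lambda>(i, m). triple_term q i (m + p) m)"
  define \<psi> where "\<psi> = (\<lambda>(s::nat, m::nat). (s - m, m))"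
  have bij: "bij_betw \<psi> (SIGMA s:UNIV. {..s}) UNIV"
    by (rule bij_betw_byWitness[where f' = "\<lambda>(i, m). (i + m, m)"]) (auto simp: \<psi>_def)
  have "G summable_on UNIV"
  proof -
    obtain K where K: "K \<ge> 0" "\<And>i j k. norm (triple_term q i j k) \<le> K * norm q ^ (i * i + j * j + k * k)"
      using triple_term_bound[OF q] by blast
    define h where "h = (\<lambda>n. norm q ^ (n * n))"
    have h: "h summable_on UNIV"
      using summable_power_mult_power_square[of "norm q" 1] q
      by (subst summable_on_UNIV_nonneg_real_iff) (auto simp: h_def)
    have bound: "norm (G (i, m)) \<le> K * (h i * h m)" for i m
    proof -
      have "norm q ^ (i * i + (m + p) * (m + p) + m * m) \<le> h i * h m"
        using q by (simp add: h_def power_decreasing flip: power_add)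
      then show ?thesis
        using K(1) K(2)[of i "m + p" m] by (simp add: G_def) (meson mult_left_mono order_trans)
    qed
    have "(\<lambda>(i, m). K * (h i * h m)) summable_on UNIV"
      using summable_on_cmult_right[OF summable_on_product_nonneg[OF h h]]
      by (simp add: h_def case_prod_unfold)
    then have "(\<lambda>x. norm (G x)) summable_on UNIV"
      by (rule Infinite_Sum.abs_summable_on_comparison_test') (use bound in auto)
    then show ?thesis
      by (rule abs_summable_summable)
  qed
  then have summable: "(\<lambda>x. G (\<psi> x)) summable_on (SIGMA s:UNIV. {..s})"
    using summable_on_reindex_bij_betw[OF bij] by blast
  have "((\<lambda>m. G (\<psi> (s, m))) has_sum q ^ (p\<^sup>2) * (q ^ (s * (s + p)) / (qpoch q q s * qpoch q q (s + p)))) {..s}"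
    for s
    using triple_term_diagonal_sum[OF q, of s p] by (simp add: has_sum_finite_iff G_def \<psi>_def)
  moreover have "((\<lambda>s. q ^ (p\<^sup>2) * (q ^ (s * (s + p)) / (qpoch q q s * qpoch q q (s + p))))
      has_sum q ^ (p\<^sup>2) * (1 / qpoch_inf q q)) UNIV"
    by (rule has_sum_cmult_right[OF durfee_identity[OF q]])
  ultimately have "((\<lambda>x. G (\<psi> x)) has_sum q ^ (p\<^sup>2) * (1 / qpoch_inf q q)) (SIGMA s:UNIV. {..s})"
    using summable by (intro has_sum_SigmaI) auto
  then have "(G has_sum q ^ (p\<^sup>2) * (1 / qpoch_inf q q)) UNIV"
    using has_sum_reindex_bij_betw[OF bij, of G] by simp
  then show ?thesis
    by (simp add: G_def)
qed

lemma triple_term_weighted_summable: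
  assumes q: "norm q < 1" and a: "a \<noteq> 0"
  shows "(\<lambda>(i, j, k). triple_term q i j k * a powi (int j - int k)) summable_on UNIV"
proof -
  define f where "f = (\<lambda>(i, j, k). triple_term q i j k * a powi (int j - int k))"
  obtain K where K: "K \<ge> 0" "\<And>i j k. norm (triple_term q i j k) \<le> K * norm q ^ (i * i + j * j + k * k)"
    using triple_term_bound[OF q] by blast
  define g where "g = (\<lambda>s n. s ^ n * norm q ^ (n * n))"
  have g: "g s summable_on UNIV" if "0 \<le> s" for s
    using summable_power_mult_power_square[of "norm q" s] q that
    by (subst summable_on_UNIV_nonneg_real_iff) (auto simp: g_def)
  define B where "B = (\<lambda>(i, j, k). K * (g 1 i * (g (norm a) j * g (inverse (norm a)) k)))"
  have B: "B summable_on UNIV"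
  proof -
    have "(\<lambda>(j, k). g (norm a) j * g (inverse (norm a)) k) summable_on UNIV"
      using summable_on_product_nonneg[OF g g] by (simp add: g_def)
    then have "(\<lambda>(i, jk). g 1 i * (\<lambda>(j, k). g (norm a) j * g (inverse (norm a)) k) jk)
        summable_on UNIV \<times> UNIV"
      by (intro summable_on_product_nonneg g) (auto simp: g_def)
    then show ?thesis
      unfolding B_def using summable_on_cmult_right by (fastforce simp: case_prod_unfold)
  qed
  have bound: "norm (f x) \<le> B x" for x
  proof -
    obtain i j k where x: "x = (i, j, k)"
      by (cases x) auto
    have "norm (a powi (int j - int k)) = norm a ^ j * inverse (norm a) ^ k"
      using a by (simp add: power_int_diff norm_divide norm_mult norm_inverse norm_power divide_inverse power_inverse)
    then have "norm (f x) \<le> K * norm q ^ (i * i + j * j + k * k) * (norm a ^ j * inverse (norm a) ^ k)"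
      unfolding f_def x case_prod_conv norm_mult using K by (intro mult_mono) auto
    also have "\<dots> = B x"
      by (simp add: B_def g_def x power_add algebra_simps)
    finally show ?thesis .
  qed
  from B have "(\<lambda>x. norm (f x)) summable_on UNIV"
    by (rule Infinite_Sum.abs_summable_on_comparison_test') (use bound in auto)
  then show ?thesis
    unfolding f_def by (rule abs_summable_summable)
qed

theorem corollary4p8:
  fixes q a :: complex
  assumes "norm q < 1" and "a \<noteq> 0"
  shows "((\<lambda>(i, j, k). q ^ (i\<^sup>2 + j\<^sup>2 + k\<^sup>2 + i * (j + k))
            / (qpoch q q i * qpoch q q j * qpoch q q k) * a powi (int j - int k))
          has_sum
          (qpoch_inf (- a * q) (q\<^sup>2) * qpoch_inf (- q / a) (q\<^sup>2) * qpoch_inf (q\<^sup>2) (q\<^sup>2)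
            / qpoch_inf q q)) (UNIV :: (nat \<times> nat \<times> nat) set)"
proof -
  define J where "J = qpoch_inf (- a * q) (q\<^sup>2) * qpoch_inf (- q / a) (q\<^sup>2) * qpoch_inf (q\<^sup>2) (q\<^sup>2)"
  define f where "f = (\<lambda>(i, j, k). triple_term q i j k * a powi (int j - int k))"
  define \<phi> where "\<phi> = (\<lambda>(n::int, i::nat, m::nat). (i, m + nat n, m + nat (- n)))"
  have bij: "bij_betw \<phi> UNIV UNIV"
    by (rule bij_betw_byWitness[where f' = "\<lambda>(i, j, k). (int j - int k, i, min j k)"])
      (auto simp: \<phi>_def min_def)
  have fibre: "(\<lambda>y. f (\<phi> (n, y))) = (\<lambda>(i, m). a powi n * triple_term q i (m + nat \<bar>n\<bar>) m)" for n
    by (cases "n \<ge> 0") (auto simp: fun_eq_iff f_def \<phi>_def triple_term_swap)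
  have "((\<lambda>y. f (\<phi> (n, y))) has_sum a powi n * (q ^ (nat \<bar>n\<bar>)\<^sup>2 / qpoch_inf q q)) UNIV" for n
    unfolding fibre
    using has_sum_cmult_right[OF triple_term_fibre_has_sum[OF assms(1), of "nat \<bar>n\<bar>"], where c = "a powi n"]
    by (simp add: case_prod_unfold)
  moreover have "((\<lambda>n. a powi n * (q ^ (nat \<bar>n\<bar>)\<^sup>2 / qpoch_inf q q)) has_sum J / qpoch_inf q q) UNIV"
    using has_sum_divide_const[OF jacobi_triple_product[OF assms]] by (simp add: J_def)
  moreover have "(\<lambda>x. f (\<phi> x)) summable_on UNIV"
    using summable_on_reindex_bij_betw[OF bij, of f] triple_term_weighted_summable[OF assms]
    by (simp add: f_def)
  ultimately have "((\<lambda>x. f (\<phi> x)) has_sum J / qpoch_inf q q) (UNIV \<times> UNIV)"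
    by (intro has_sum_SigmaI) auto
  then have "(f has_sum J / qpoch_inf q q) UNIV"
    using has_sum_reindex_bij_betw[OF bij, of f] by simp
  then show ?thesis
    by (simp add: f_def triple_term_def J_def)
qed

end
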